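(* Let $G$ be a finite simple graph with vertices in $\mathbb{N}$ and let $G_1,\ldots,G_m$ be its connected components. Then the independence complex $\Delta(G)$ is sortable if and only if each $\Delta(G_r)$, $r=1,\dots,m$, is sortable.
   Context: The independence complex $\Delta(G)$ of a graph $G$ is the simplicial complex of all independent sets of vertices of $G$ (sets containing no edge). For finite $F,G\subset\mathbb{N}$ with $|F|=r,|G|=s$, write $\mathbf{x}^F\mathbf{x}^G=x_{i_1}\cdots x_{i_{r+s}}$ with $i_1\le\cdots\le i_{r+s}$ (where $\mathbf{x}^F=\prod_{i\in F}x_i$) and set $\mathrm{sort}(F,G)=(\{i_k:k\text{ odd}\},\{i_k:k\text{ even}\})$. A simplicial complex $\Delta$ with $V(\Delta)\subset\mathbb{N}$ is sortable with respect to the given labeling if $\mathrm{sort}(F,G)\in\Delta\times\Delta$ for all $F,G\in\Delta$; it is sortable if it is sortable with respect to some labeling of its vertices by distinct integers. *)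

theory Defs
  imports Main
begin

definition simple_graph :: "nat set \<Rightarrow> nat set set \<Rightarrow> bool" where
  "simple_graph V E \<longleftrightarrow> finite V \<and> (\<forall>e\<in>E. e \<subseteq> V \<and> card e = 2)"

definition indep_complex :: "nat set \<Rightarrow> nat set set \<Rightarrow> nat set set" where
  "indep_complex V E = {F. F \<subseteq> V \<and> (\<forall>e\<in>E. \<not> e \<subseteq> F)}"

definition adj :: "nat set set \<Rightarrow> nat \<Rightarrow> nat \<Rightarrow> bool" where
  "adj E u v \<longleftrightarrow> {u, v} \<in> E"

definition components :: "nat set \<Rightarrow> nat set set \<Rightarrow> nat set set" where
  "components V E = {{w \<in> V. (adj E)\<^sup>*\<^sup>* v w} | v. v \<in> V}"

definition induced_edges :: "nat set set \<Rightarrow> nat set \<Rightarrow> nat set set" where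
  "induced_edges E C = {e \<in> E. e \<subseteq> C}"

text \<open>sort(F,G): sort the multiset union, odd positions (1-based) to the first
  set, even positions to the second.\<close>
definition sort_pair :: "nat set \<Rightarrow> nat set \<Rightarrow> nat set \<times> nat set" where
  "sort_pair F G =
     (let xs = sort (sorted_list_of_set F @ sorted_list_of_set G)
      in ({xs ! k | k. k < length xs \<and> even k}, {xs ! k | k. k < length xs \<and> odd k}))"

definition sortable_wrt :: "nat set set \<Rightarrow> bool" where
  "sortable_wrt \<Delta> \<longleftrightarrow>
     (\<forall>F\<in>\<Delta>. \<forall>G\<in>\<Delta>. fst (sort_pair F G) \<in> \<Delta> \<and> snd (sort_pair F G) \<in> \<Delta>)"

text \<open>Sortable: sortable w.r.t. some relabelling of the vertices by distinct integers
  (here naturals; only the relative order matters).\<close>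
definition sortable :: "nat set set \<Rightarrow> bool" where
  "sortable \<Delta> \<longleftrightarrow> (\<exists>f :: nat \<Rightarrow> nat. inj_on f (\<Union>\<Delta>) \<and> sortable_wrt ((\<lambda>F. f ` F) ` \<Delta>))"

end

theory Submission
  imports Defs
begin

text \<open>
  In the merged list of \<open>F\<close> and \<open>G\<close> an element occupies a block of consecutive
  positions, so \<open>sort(F,G)\<close> depends only on which of \<open>F, G\<close> contain it and on the
  parity of the number of smaller entries. Consequently, if the labels of a set \<open>T\<close> form an
  interval with respect to \<open>F \<union> G\<close>, sorting commutes with intersecting by \<open>T\<close> up to
  swapping the two parts. Now \<open>\<Delta>(G)\<close> is the join of the complexes \<open>\<Delta>(G\<^sub>r)\<close>.
  Sorting never leaves \<open>F \<union> G\<close>, so each \<open>\<Delta>(G\<^sub>r)\<close>, an induced subcomplex, inherits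
  sortability. Conversely, relabel the components by pairwise disjoint intervals, each carrying a
  translate of a sorting labelling of the component; sorting then acts blockwise, and the join
  is sortable.
\<close>

section \<open>Sorting two finite sets\<close>

lemma sorted_nth_iff_less_length_filter:
  fixes xs :: "'a::linorder list"
  assumes "sorted xs" and "k < length xs" and down: "\<And>y z. P y \<Longrightarrow> z \<le> y \<Longrightarrow> P z"
  shows "P (xs ! k) \<longleftrightarrow> k < length (filter P xs)"
  using assms(1,2)
proof (induction xs arbitrary: k)
  case (Cons x xs)
  show ?case
  proof (cases k)
    case 0
    have "\<not> P x \<Longrightarrow> filter P xs = []"
      using Cons.prems(1) down by (auto simp: filter_empty_conv)
    then show ?thesis using 0 by auto
  next
    case (Suc j)
    have "P (xs ! j) \<Longrightarrow> P x"
      using Cons.prems Suc down by auto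
    then show ?thesis using Cons Suc by auto
  qed
qed simp

lemma sorted_positions_eq:
  fixes xs :: "'a::linorder list"
  assumes "sorted xs"
  shows "{k. k < length xs \<and> xs ! k = x} =
         {length (filter (\<lambda>y. y < x) xs)..<length (filter (\<lambda>y. y \<le> x) xs)}"
proof -
  have less: "xs ! k < x \<longleftrightarrow> k < length (filter (\<lambda>y. y < x) xs)"
    and le: "xs ! k \<le> x \<longleftrightarrow> k < length (filter (\<lambda>y. y \<le> x) xs)" if "k < length xs" for k
    by (rule sorted_nth_iff_less_length_filter[OF assms that]; auto)+
  have "k < length xs \<and> xs ! k = x \<longleftrightarrow>
        length (filter (\<lambda>y. y < x) xs) \<le> k \<and> k < length (filter (\<lambda>y. y \<le> x) xs)" for k
  proof
    assume "k < length xs \<and> xs ! k = x"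
    then have "\<not> k < length (filter (\<lambda>y. y < x) xs)" and "k < length (filter (\<lambda>y. y \<le> x) xs)"
      using less[of k] le[of k] by simp_all
    then show "length (filter (\<lambda>y. y < x) xs) \<le> k \<and> k < length (filter (\<lambda>y. y \<le> x) xs)"
      by simp
  next
    assume k: "length (filter (\<lambda>y. y < x) xs) \<le> k \<and> k < length (filter (\<lambda>y. y \<le> x) xs)"
    then have len: "k < length xs"
      using length_filter_le[of "\<lambda>y. y \<le> x" xs] by linarith
    then have "\<not> xs ! k < x" and "xs ! k \<le> x"
      using less[of k] le[of k] k by simp_all
    then show "k < length xs \<and> xs ! k = x"
      using len by simp
  qed
  then show ?thesis by (simp add: set_eq_iff)
qed

lemma length_filter_merge:
  assumes "finite A" and "finite B"
  shows "length (filter P (sort (sorted_list_of_set A @ sorted_list_of_set B))) =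
         card {y \<in> A. P y} + card {y \<in> B. P y}"
  using assms
  by (simp add: filter_sort distinct_length_filter Collect_conj_eq Int_commute)

definition rank_below :: "nat set \<Rightarrow> nat set \<Rightarrow> nat \<Rightarrow> nat" where
  "rank_below A B x = card {y \<in> A. y < x} + card {y \<in> B. y < x}"

text \<open>
  An element of \<open>A \<inter> B\<close> occupies two consecutive positions of the merged list and so
  lies in both parts of \<open>sort_pair A B\<close>; any other element of \<open>A \<union> B\<close> lies in the
  first part iff it is preceded by an even number of entries.
\<close>
definition sort_part :: "bool \<Rightarrow> nat set \<Rightarrow> nat set \<Rightarrow> nat set" where
  "sort_part b A B = A \<inter> B \<union> {x. (x \<in> A) \<noteq> (x \<in> B) \<and> even (rank_below A B x) = b}"

lemma card_le_eq_card_less_plus: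
  fixes x :: "'a::linorder"
  assumes "finite A"
  shows "card {y \<in> A. y \<le> x} = card {y \<in> A. y < x} + of_bool (x \<in> A)"
proof -
  have "{y \<in> A. y \<le> x} = {y \<in> A. y < x} \<union> A \<inter> {x}" by auto
  then show ?thesis using assms by (simp add: card_Un_disjoint)
qed

lemma merge_positions_eq:
  assumes "finite A" and "finite B"
  defines "xs \<equiv> sort (sorted_list_of_set A @ sorted_list_of_set B)"
  shows "{k. k < length xs \<and> xs ! k = x} =
         {rank_below A B x..<rank_below A B x + of_bool (x \<in> A) + of_bool (x \<in> B)}"
  using sorted_positions_eq[of xs x] length_filter_merge[OF assms(1,2)]
    card_le_eq_card_less_plus[OF assms(1)] card_le_eq_card_less_plus[OF assms(2)]
  by (simp add: xs_def rank_below_def)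

lemma even_in_interval_iff:
  fixes p :: nat
  shows "(\<exists>k\<in>{p..<p + of_bool a + of_bool b}. even k = c) \<longleftrightarrow> a \<and> b \<or> a \<noteq> b \<and> even p = c"
proof (cases a; cases b)
  assume "a" "b"
  then have "{p..<p + of_bool a + of_bool b} = {p, Suc p}" by auto
  then show ?thesis using \<open>a\<close> \<open>b\<close> by auto
qed auto

lemma sort_pair_eq:
  assumes "finite A" and "finite B"
  shows "sort_pair A B = (sort_part True A B, sort_part False A B)"
proof -
  define xs where "xs = sort (sorted_list_of_set A @ sorted_list_of_set B)"
  have "x \<in> {xs ! k | k. k < length xs \<and> even k = c} \<longleftrightarrow> x \<in> sort_part c A B" for x c
  proof -
    have "x \<in> {xs ! k | k. k < length xs \<and> even k = c} \<longleftrightarrow>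
          (\<exists>k\<in>{k. k < length xs \<and> xs ! k = x}. even k = c)"
      by auto
    then show ?thesis
      unfolding xs_def merge_positions_eq[OF assms] even_in_interval_iff sort_part_def by auto
  qed
  from this[of _ True] this[of _ False] show ?thesis
    unfolding sort_pair_def Let_def xs_def[symmetric] by auto
qed

lemma sort_part_subset: "sort_part b A B \<subseteq> A \<union> B"
  by (auto simp: sort_part_def)

lemma sort_pair_subset: "fst (sort_pair A B) \<union> snd (sort_pair A B) \<subseteq> A \<union> B"
proof -
  define xs where "xs = sort (sorted_list_of_set A @ sorted_list_of_set B)"
  have "set (sorted_list_of_set X) \<subseteq> X" for X :: "nat set"
    by (cases "finite X") auto
  then have "set xs \<subseteq> A \<union> B"
    unfolding xs_def by auto
  then show ?thesis
    unfolding sort_pair_def Let_def xs_def[symmetric] by (auto dest!: nth_mem)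
qed

lemma sortable_wrtD_sort_part:
  assumes "sortable_wrt D" and "F \<in> D" and "G \<in> D" and "finite F" and "finite G"
  shows "sort_part b F G \<in> D"
proof -
  have "fst (sort_pair F G) \<in> D" "snd (sort_pair F G) \<in> D"
    using assms(1-3) unfolding sortable_wrt_def by auto
  then show ?thesis
    using sort_pair_eq[OF assms(4,5)] by (cases b) auto
qed

lemma sortable_wrtI_sort_part:
  assumes "\<And>F G b. F \<in> D \<Longrightarrow> G \<in> D \<Longrightarrow> sort_part b F G \<in> D" and "\<forall>F\<in>D. finite F"
  shows "sortable_wrt D"
  unfolding sortable_wrt_def
proof (intro ballI)
  fix F G assume "F \<in> D" "G \<in> D"
  then show "fst (sort_pair F G) \<in> D \<and> snd (sort_pair F G) \<in> D"
    using assms sort_pair_eq[of F G] by simp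
qed

lemma sort_part_Int_block:
  assumes "finite A" and "finite B"
    and block: "\<forall>y\<in>A \<union> B - T. (\<forall>t\<in>T. y < t) \<or> (\<forall>t\<in>T. t < y)"
  shows "\<exists>b'. sort_part b A B \<inter> T = sort_part b' (A \<inter> T) (B \<inter> T)"
proof -
  define K where "K = card {y \<in> A - T. \<forall>t\<in>T. y < t} + card {y \<in> B - T. \<forall>t\<in>T. y < t}"
  have card_split: "card {y \<in> X. y < x} = card {y \<in> X \<inter> T. y < x} + card {y \<in> X - T. \<forall>t\<in>T. y < t}"
    if "x \<in> T" "finite X" "X \<subseteq> A \<union> B" for X x
  proof -
    have "{y \<in> X. y < x} = {y \<in> X \<inter> T. y < x} \<union> {y \<in> X - T. \<forall>t\<in>T. y < t}"
    proof (intro equalityI subsetI)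
      fix y assume y: "y \<in> {y \<in> X. y < x}"
      show "y \<in> {y \<in> X \<inter> T. y < x} \<union> {y \<in> X - T. \<forall>t\<in>T. y < t}"
      proof (cases "y \<in> T")
        case False
        then have "(\<forall>t\<in>T. y < t) \<or> (\<forall>t\<in>T. t < y)"
          using block y that by auto
        then show ?thesis
          using y False \<open>x \<in> T\<close> by fastforce
      qed (use y in auto)
    qed (use that in auto)
    moreover have "card ({y \<in> X \<inter> T. y < x} \<union> {y \<in> X - T. \<forall>t\<in>T. y < t}) =
        card {y \<in> X \<inter> T. y < x} + card {y \<in> X - T. \<forall>t\<in>T. y < t}"
      by (rule card_Un_disjoint) (use that in auto)
    ultimately show ?thesis by simp
  qed
  have rank: "rank_below A B x = rank_below (A \<inter> T) (B \<inter> T) x + K" if "x \<in> T" for x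
    using card_split[OF that assms(1)] card_split[OF that assms(2)] unfolding rank_below_def K_def by simp
  have "sort_part b A B \<inter> T = sort_part (b = even K) (A \<inter> T) (B \<inter> T)"
    using rank by (auto simp: sort_part_def)
  then show ?thesis ..
qed

lemma sort_part_image_add:
  "sort_part b ((+) c ` A) ((+) c ` B) = (+) c ` sort_part b A B"
proof -
  have card_shift: "card {y \<in> (+) c ` X. y < c + x} = card {y \<in> X. y < x}" for X x
  proof -
    have "{y \<in> (+) c ` X. y < c + x} = (+) c ` {y \<in> X. y < x}" by auto
    then show ?thesis by (simp add: card_image)
  qed
  have rank: "rank_below ((+) c ` A) ((+) c ` B) (c + x) = rank_below A B x" for x
    unfolding rank_below_def card_shift ..
  show ?thesis
  proof (intro equalityI subsetI)
    fix z assume z: "z \<in> sort_part b ((+) c ` A) ((+) c ` B)"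
    then obtain x where "z = c + x"
      using sort_part_subset by blast
    then show "z \<in> (+) c ` sort_part b A B"
      using z rank[of x] by (auto simp: sort_part_def)
  next
    fix z assume "z \<in> (+) c ` sort_part b A B"
    then obtain x where "z = c + x" "x \<in> sort_part b A B" by blast
    then show "z \<in> sort_part b ((+) c ` A) ((+) c ` B)"
      using rank[of x] by (auto simp: sort_part_def)
  qed
qed

section \<open>Induced subcomplexes and joins\<close>

lemma sortable_wrt_subcomplex:
  assumes "sortable_wrt D"
  shows "sortable_wrt {F \<in> D. F \<subseteq> T}"
  unfolding sortable_wrt_def
proof (intro ballI)
  fix F G assume "F \<in> {F \<in> D. F \<subseteq> T}" "G \<in> {F \<in> D. F \<subseteq> T}"
  moreover have "fst (sort_pair F G) \<union> snd (sort_pair F G) \<subseteq> F \<union> G"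
    by (rule sort_pair_subset)
  ultimately show "fst (sort_pair F G) \<in> {F \<in> D. F \<subseteq> T} \<and> snd (sort_pair F G) \<in> {F \<in> D. F \<subseteq> T}"
    using assms unfolding sortable_wrt_def by auto
qed

lemma sortable_induced_subcomplex:
  assumes "sortable \<Delta>"
  shows "sortable {F \<in> \<Delta>. F \<subseteq> T}"
proof -
  obtain f where inj: "inj_on f (\<Union>\<Delta>)" and sw: "sortable_wrt ((\<lambda>F. f ` F) ` \<Delta>)"
    using assms unfolding sortable_def by blast
  have "(\<lambda>F. f ` F) ` {F \<in> \<Delta>. F \<subseteq> T} = {X \<in> (\<lambda>F. f ` F) ` \<Delta>. X \<subseteq> f ` (T \<inter> \<Union>\<Delta>)}"
  proof (intro equalityI subsetI)
    fix X assume "X \<in> {X \<in> (\<lambda>F. f ` F) ` \<Delta>. X \<subseteq> f ` (T \<inter> \<Union>\<Delta>)}"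
    then obtain F where F: "F \<in> \<Delta>" "X = f ` F" "f ` F \<subseteq> f ` (T \<inter> \<Union>\<Delta>)" by blast
    have "x \<in> T" if x: "x \<in> F" for x
    proof -
      obtain t where "t \<in> T \<inter> \<Union>\<Delta>" "f x = f t"
        using F(3) x by blast
      moreover have "x \<in> \<Union>\<Delta>"
        using F(1) x by blast
      ultimately show ?thesis
        using inj by (metis IntD1 IntD2 inj_onD)
    qed
    then have "F \<subseteq> T" ..
    then show "X \<in> (\<lambda>F. f ` F) ` {F \<in> \<Delta>. F \<subseteq> T}"
      using F by blast
  next
    fix X assume "X \<in> (\<lambda>F. f ` F) ` {F \<in> \<Delta>. F \<subseteq> T}"
    then obtain F where F: "F \<in> \<Delta>" "F \<subseteq> T" "X = f ` F" by blast
    then have "F \<subseteq> T \<inter> \<Union>\<Delta>" by blast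
    then show "X \<in> {X \<in> (\<lambda>F. f ` F) ` \<Delta>. X \<subseteq> f ` (T \<inter> \<Union>\<Delta>)}"
      using F by (simp add: image_mono)
  qed
  then have "sortable_wrt ((\<lambda>F. f ` F) ` {F \<in> \<Delta>. F \<subseteq> T})"
    using sortable_wrt_subcomplex[OF sw] by simp
  moreover have "inj_on f (\<Union>{F \<in> \<Delta>. F \<subseteq> T})"
    using inj by (rule inj_on_subset) blast
  ultimately show ?thesis
    unfolding sortable_def by blast
qed

lemma sortable_wrt_image_add:
  assumes "sortable_wrt D" and "\<forall>F\<in>D. finite F"
  shows "sortable_wrt ((\<lambda>F. (+) c ` F) ` D)"
proof (rule sortable_wrtI_sort_part)
  fix X Y b assume "X \<in> (\<lambda>F. (+) c ` F) ` D" "Y \<in> (\<lambda>F. (+) c ` F) ` D"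
  then obtain F G where "F \<in> D" "G \<in> D" "X = (+) c ` F" "Y = (+) c ` G" by blast
  then show "sort_part b X Y \<in> (\<lambda>F. (+) c ` F) ` D"
    using sortable_wrtD_sort_part[OF assms(1)] assms(2) by (simp add: sort_part_image_add)
qed (use assms(2) in simp)

definition join_complex :: "'i set \<Rightarrow> ('i \<Rightarrow> nat set) \<Rightarrow> ('i \<Rightarrow> nat set set) \<Rightarrow> nat set set" where
  "join_complex I B \<Delta> = {F. F \<subseteq> (\<Union>i\<in>I. B i) \<and> (\<forall>i\<in>I. F \<inter> B i \<in> \<Delta> i)}"

lemma sortable_wrt_join_complex:
  assumes ordered: "\<forall>i\<in>I. \<forall>j\<in>I. i \<noteq> j \<longrightarrow> (\<forall>x\<in>B i. \<forall>y\<in>B j. x < y) \<or> (\<forall>x\<in>B i. \<forall>y\<in>B j. y < x)"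
    and fin: "finite (\<Union>i\<in>I. B i)"
    and sw: "\<forall>i\<in>I. sortable_wrt (\<Delta> i)"
  shows "sortable_wrt (join_complex I B \<Delta>)"
proof (rule sortable_wrtI_sort_part)
  fix X Y b assume X: "X \<in> join_complex I B \<Delta>" and Y: "Y \<in> join_complex I B \<Delta>"
  then have XY: "X \<subseteq> (\<Union>i\<in>I. B i)" "Y \<subseteq> (\<Union>i\<in>I. B i)" "finite X" "finite Y"
    using finite_subset[OF _ fin] by (simp_all add: join_complex_def)
  have "sort_part b X Y \<inter> B i \<in> \<Delta> i" if i: "i \<in> I" for i
  proof -
    have "\<forall>y\<in>X \<union> Y - B i. (\<forall>t\<in>B i. y < t) \<or> (\<forall>t\<in>B i. t < y)"
    proof
      fix y assume y: "y \<in> X \<union> Y - B i"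
      then obtain j where j: "j \<in> I" "y \<in> B j" "j \<noteq> i"
        using XY by blast
      then have "(\<forall>x\<in>B i. \<forall>z\<in>B j. x < z) \<or> (\<forall>x\<in>B i. \<forall>z\<in>B j. z < x)"
        using ordered i by blast
      then show "(\<forall>t\<in>B i. y < t) \<or> (\<forall>t\<in>B i. t < y)"
        using j(2) by blast
    qed
    then obtain b' where "sort_part b X Y \<inter> B i = sort_part b' (X \<inter> B i) (Y \<inter> B i)"
      using sort_part_Int_block[OF XY(3,4), of "B i" b] by blast
    moreover have "X \<inter> B i \<in> \<Delta> i" "Y \<inter> B i \<in> \<Delta> i"
      using X Y i by (auto simp: join_complex_def)
    ultimately show ?thesis
      using sortable_wrtD_sort_part[of "\<Delta> i" "X \<inter> B i" "Y \<inter> B i" b'] sw i XY(3,4) by simp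
  qed
  moreover have "sort_part b X Y \<subseteq> (\<Union>i\<in>I. B i)"
    using sort_part_subset[of b X Y] XY(1,2) by blast
  ultimately show "sort_part b X Y \<in> join_complex I B \<Delta>"
    by (simp add: join_complex_def)
qed (use finite_subset[OF _ fin] in \<open>simp add: join_complex_def\<close>)

lemma image_join_complex:
  assumes inj: "inj_on g (\<Union>i\<in>I. B i)" and faces: "\<forall>i\<in>I. \<forall>F\<in>\<Delta> i. F \<subseteq> B i"
  shows "(\<lambda>F. g ` F) ` join_complex I B \<Delta> = join_complex I (\<lambda>i. g ` B i) (\<lambda>i. (\<lambda>F. g ` F) ` \<Delta> i)"
proof (intro equalityI subsetI)
  fix X assume "X \<in> (\<lambda>F. g ` F) ` join_complex I B \<Delta>"
  then obtain F where F: "X = g ` F" "F \<subseteq> (\<Union>i\<in>I. B i)" "\<forall>i\<in>I. F \<inter> B i \<in> \<Delta> i"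
    by (auto simp: join_complex_def)
  have "X \<inter> g ` B i \<in> (\<lambda>F. g ` F) ` \<Delta> i" if i: "i \<in> I" for i
  proof -
    have "X \<inter> g ` B i = g ` (F \<inter> B i)"
      using inj_on_image_Int[OF inj F(2), of "B i"] i F(1) by blast
    then show ?thesis
      using F(3) i by blast
  qed
  moreover have "X \<subseteq> (\<Union>i\<in>I. g ` B i)"
    using F(1) image_mono[OF F(2), of g] by (simp add: image_UN)
  ultimately show "X \<in> join_complex I (\<lambda>i. g ` B i) (\<lambda>i. (\<lambda>F. g ` F) ` \<Delta> i)"
    by (simp add: join_complex_def)
next
  fix X assume X: "X \<in> join_complex I (\<lambda>i. g ` B i) (\<lambda>i. (\<lambda>F. g ` F) ` \<Delta> i)"
  define F where "F = {v \<in> (\<Union>i\<in>I. B i). g v \<in> X}"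
  have X_sub: "X \<subseteq> (\<Union>i\<in>I. g ` B i)"
    using X by (simp add: join_complex_def)
  have XF: "X = g ` F"
  proof (intro equalityI subsetI)
    fix x assume x: "x \<in> X"
    then obtain i v where "i \<in> I" "v \<in> B i" "x = g v"
      using X_sub by blast
    then have "v \<in> F"
      unfolding F_def using x by blast
    then show "x \<in> g ` F"
      using \<open>x = g v\<close> by (rule rev_image_eqI)
  qed (auto simp: F_def)
  have "F \<inter> B i \<in> \<Delta> i" if i: "i \<in> I" for i
  proof -
    obtain K where K: "K \<in> \<Delta> i" "X \<inter> g ` B i = g ` K"
      using X i unfolding join_complex_def by blast
    have KB: "K \<subseteq> B i"
      using K(1) faces i by blast
    have "F \<inter> B i = K"
    proof (intro equalityI subsetI)
      fix v assume v: "v \<in> F \<inter> B i"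
      then have "g v \<in> X \<inter> g ` B i"
        unfolding F_def by blast
      then obtain k where k: "k \<in> K" "g v = g k"
        using K(2) by auto
      have "v \<in> (\<Union>i\<in>I. B i)" "k \<in> (\<Union>i\<in>I. B i)"
        using v k(1) KB i unfolding F_def by auto
      then show "v \<in> K"
        using inj_onD[OF inj k(2)] k(1) by simp
    next
      fix k assume k: "k \<in> K"
      then have "g k \<in> X"
        using K(2) by auto
      then show "k \<in> F \<inter> B i"
        using k KB i unfolding F_def by auto
    qed
    then show ?thesis using K by simp
  qed
  moreover have "F \<subseteq> (\<Union>i\<in>I. B i)"
    unfolding F_def by blast
  ultimately have "F \<in> join_complex I B \<Delta>"
    by (simp add: join_complex_def)
  then show "X \<in> (\<lambda>F. g ` F) ` join_complex I B \<Delta>"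
    using XF by simp
qed

lemma ordered_block_labelling:
  assumes "finite I" and fin: "\<forall>i\<in>I. finite (B i)"
    and disj: "\<forall>i\<in>I. \<forall>j\<in>I. i \<noteq> j \<longrightarrow> B i \<inter> B j = {}"
    and inj: "\<forall>i\<in>I. inj_on (h i) (B i)"
  obtains g :: "nat \<Rightarrow> nat" where "inj_on g (\<Union>i\<in>I. B i)"
    and "\<forall>i\<in>I. \<exists>c. \<forall>x\<in>B i. g x = c + h i x"
    and "\<forall>i\<in>I. \<forall>j\<in>I. i \<noteq> j \<longrightarrow> (\<forall>x\<in>B i. \<forall>y\<in>B j. g x < g y) \<or> (\<forall>x\<in>B i. \<forall>y\<in>B j. g y < g x)"
proof -
  obtain idx :: "'a \<Rightarrow> nat" where idx: "inj_on idx I"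
    using finite_imp_inj_to_nat_seg[OF \<open>finite I\<close>] by blast
  define M where "M = Suc (Max (\<Union>i\<in>I. h i ` B i))"
  \<comment> \<open>block \<open>i\<close> is labelled inside the interval \<open>[M * idx i, M * idx i + M)\<close>\<close>
  have h_less: "h i x < M" if "i \<in> I" "x \<in> B i" for i x
  proof -
    have "finite (\<Union>i\<in>I. h i ` B i)"
      using \<open>finite I\<close> fin by simp
    moreover have "h i x \<in> (\<Union>i\<in>I. h i ` B i)"
      using that by blast
    ultimately show ?thesis
      unfolding M_def by (simp add: le_imp_less_Suc)
  qed
  define blk where "blk v = (THE i. i \<in> I \<and> v \<in> B i)" for v
  have blk: "blk v = i" if "i \<in> I" "v \<in> B i" for i v
    unfolding blk_def using that disj by (intro the_equality) auto
  define g where "g v = M * idx (blk v) + h (blk v) v" for v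
  have g_eq: "g x = M * idx i + h i x" if "i \<in> I" "x \<in> B i" for i x
    using blk[OF that] by (simp add: g_def)
  have g_less: "g x < g y"
    if "i \<in> I" "j \<in> I" "idx i < idx j" "x \<in> B i" "y \<in> B j" for i j x y
  proof -
    have "g x < M * Suc (idx i)"
      using g_eq h_less that by simp
    also have "\<dots> \<le> M * idx j"
      using that(3) by (intro mult_le_mono2) simp
    also have "\<dots> \<le> g y"
      using g_eq that by simp
    finally show ?thesis .
  qed
  have ordered: "\<forall>i\<in>I. \<forall>j\<in>I. i \<noteq> j \<longrightarrow> (\<forall>x\<in>B i. \<forall>y\<in>B j. g x < g y) \<or> (\<forall>x\<in>B i. \<forall>y\<in>B j. g y < g x)"
    using g_less idx unfolding inj_on_def by (metis linorder_neqE_nat)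
  have "inj_on g (\<Union>i\<in>I. B i)"
  proof (rule inj_onI)
    fix x y assume "x \<in> (\<Union>i\<in>I. B i)" "y \<in> (\<Union>i\<in>I. B i)" and gxy: "g x = g y"
    then obtain i j where ij: "i \<in> I" "x \<in> B i" "j \<in> I" "y \<in> B j" by blast
    then have "i = j"
      using ordered gxy by (metis less_irrefl)
    then have "h i x = h i y"
      using gxy g_eq ij by simp
    then show "x = y"
      using inj ij \<open>i = j\<close> by (auto dest: inj_onD)
  qed
  moreover have "\<forall>i\<in>I. \<exists>c. \<forall>x\<in>B i. g x = c + h i x"
    using g_eq by blast
  ultimately show ?thesis
    using ordered that by blast
qed

lemma sortable_join_complex:
  assumes "finite I" and fin: "\<forall>i\<in>I. finite (B i)"
    and disj: "\<forall>i\<in>I. \<forall>j\<in>I. i \<noteq> j \<longrightarrow> B i \<inter> B j = {}"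
    and vertices: "\<forall>i\<in>I. \<Union>(\<Delta> i) = B i"
    and sortable: "\<forall>i\<in>I. sortable (\<Delta> i)"
  shows "sortable (join_complex I B \<Delta>)"
proof -
  obtain h where h: "\<forall>i\<in>I. inj_on (h i) (B i) \<and> sortable_wrt ((\<lambda>F. h i ` F) ` \<Delta> i)"
    using sortable vertices unfolding sortable_def by metis
  obtain g where inj: "inj_on g (\<Union>i\<in>I. B i)"
    and shift: "\<forall>i\<in>I. \<exists>c. \<forall>x\<in>B i. g x = c + h i x"
    and ordered: "\<forall>i\<in>I. \<forall>j\<in>I. i \<noteq> j \<longrightarrow> (\<forall>x\<in>B i. \<forall>y\<in>B j. g x < g y) \<or> (\<forall>x\<in>B i. \<forall>y\<in>B j. g y < g x)"
    using ordered_block_labelling[OF \<open>finite I\<close> fin disj] h by blast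
  have faces: "\<forall>i\<in>I. \<forall>F\<in>\<Delta> i. F \<subseteq> B i"
    using vertices by blast
  have labelled: "sortable_wrt ((\<lambda>F. g ` F) ` \<Delta> i)" if i: "i \<in> I" for i
  proof -
    obtain c where c: "\<forall>x\<in>B i. g x = c + h i x"
      using shift i by blast
    have "g ` F = (+) c ` h i ` F" if "F \<in> \<Delta> i" for F
      unfolding image_image
    proof (rule image_cong[OF refl])
      fix x assume "x \<in> F"
      then show "g x = c + h i x"
        using c faces i that by blast
    qed
    then have "(\<lambda>F. g ` F) ` \<Delta> i = (\<lambda>F. (+) c ` F) ` (\<lambda>F. h i ` F) ` \<Delta> i"
      unfolding image_image by (rule image_cong[OF refl])
    moreover have "finite F" if "F \<in> \<Delta> i" for F
      using finite_subset[of F "B i"] faces fin i that by blast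
    then have "\<forall>F\<in>(\<lambda>F. h i ` F) ` \<Delta> i. finite F"
      by blast
    ultimately show ?thesis
      using sortable_wrt_image_add h i by simp
  qed
  have "\<forall>i\<in>I. \<forall>j\<in>I. i \<noteq> j \<longrightarrow>
      (\<forall>x\<in>g ` B i. \<forall>y\<in>g ` B j. x < y) \<or> (\<forall>x\<in>g ` B i. \<forall>y\<in>g ` B j. y < x)"
    using ordered by simp
  moreover have "finite (\<Union>i\<in>I. g ` B i)"
    using \<open>finite I\<close> fin by simp
  ultimately have "sortable_wrt (join_complex I (\<lambda>i. g ` B i) (\<lambda>i. (\<lambda>F. g ` F) ` \<Delta> i))"
    using labelled by (intro sortable_wrt_join_complex) auto
  then have "sortable_wrt ((\<lambda>F. g ` F) ` join_complex I B \<Delta>)"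
    unfolding image_join_complex[OF inj faces] .
  moreover have "inj_on g (\<Union>(join_complex I B \<Delta>))"
    using inj by (rule inj_on_subset) (auto simp: join_complex_def)
  ultimately show ?thesis
    unfolding sortable_def by blast
qed

section \<open>Independence complexes and connected components\<close>

definition component_of :: "nat set \<Rightarrow> nat set set \<Rightarrow> nat \<Rightarrow> nat set" where
  "component_of V E v = {w \<in> V. (adj E)\<^sup>*\<^sup>* v w}"

lemma components_eq_image: "components V E = component_of V E ` V"
  unfolding components_def component_of_def by blast

lemma adj_sym: "adj E u v \<Longrightarrow> adj E v u"
  by (simp add: adj_def insert_commute)

lemma adj_rtranclp_sym: "(adj E)\<^sup>*\<^sup>* u v \<Longrightarrow> (adj E)\<^sup>*\<^sup>* v u"
proof (induction rule: rtranclp.induct)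
  case (rtrancl_into_rtrancl a b c)
  then show ?case by (meson adj_sym converse_rtranclp_into_rtranclp)
qed simp

lemma component_of_eq: "w \<in> component_of V E v \<Longrightarrow> component_of V E w = component_of V E v"
  unfolding component_of_def by (auto intro: rtranclp_trans adj_rtranclp_sym)

lemma components_disjoint:
  assumes "C \<in> components V E" and "D \<in> components V E" and "C \<noteq> D"
  shows "C \<inter> D = {}"
  using assms component_of_eq unfolding components_eq_image by blast

lemma Union_components: "\<Union>(components V E) = V"
  unfolding components_eq_image component_of_def by auto

lemma component_subset: "C \<in> components V E \<Longrightarrow> C \<subseteq> V"
  unfolding components_def by blast

lemma edge_subset_component:
  assumes "simple_graph V E" and "e \<in> E"
  shows "\<exists>C\<in>components V E. e \<subseteq> C"
proof -
  have "e \<subseteq> V" "card e = 2"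
    using assms by (auto simp: simple_graph_def)
  then obtain u w where uw: "e = {u, w}" "u \<in> V" "w \<in> V"
    by (auto simp: card_2_iff)
  then have "e \<subseteq> component_of V E u"
    using \<open>e \<in> E\<close> by (auto simp: component_of_def adj_def)
  then show ?thesis
    using uw(2) unfolding components_eq_image by blast
qed

lemma Union_indep_complex:
  assumes "\<forall>e\<in>E. card e = 2"
  shows "\<Union>(indep_complex V E) = V"
proof (intro equalityI subsetI)
  fix x assume "x \<in> V"
  then have "{x} \<in> indep_complex V E"
    using assms unfolding indep_complex_def by (auto dest!: subset_singletonD)
  then show "x \<in> \<Union>(indep_complex V E)" by blast
qed (auto simp: indep_complex_def)

lemma indep_complex_induced_edges:
  assumes "C \<subseteq> V"
  shows "indep_complex C (induced_edges E C) = {F \<in> indep_complex V E. F \<subseteq> C}"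
  using assms unfolding indep_complex_def induced_edges_def by blast

lemma indep_complex_eq_join_components:
  assumes "simple_graph V E"
  shows "indep_complex V E =
         join_complex (components V E) (\<lambda>C. C) (\<lambda>C. indep_complex C (induced_edges E C))"
proof (intro equalityI subsetI)
  fix F assume F: "F \<in> indep_complex V E"
  then have "F \<subseteq> \<Union>(components V E)"
    unfolding Union_components by (simp add: indep_complex_def)
  moreover have "F \<inter> C \<in> indep_complex C (induced_edges E C)" for C
    using F unfolding indep_complex_def induced_edges_def by blast
  ultimately show "F \<in> join_complex (components V E) (\<lambda>C. C) (\<lambda>C. indep_complex C (induced_edges E C))"
    by (simp add: join_complex_def)
next
  fix F assume F: "F \<in> join_complex (components V E) (\<lambda>C. C) (\<lambda>C. indep_complex C (induced_edges E C))"
  have "\<not> e \<subseteq> F" if "e \<in> E" for e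
  proof
    assume "e \<subseteq> F"
    obtain C where C: "C \<in> components V E" "e \<subseteq> C"
      using edge_subset_component[OF assms \<open>e \<in> E\<close>] by blast
    have "F \<inter> C \<in> indep_complex C (induced_edges E C)"
      using F C(1) by (simp add: join_complex_def)
    moreover have "e \<in> induced_edges E C"
      using \<open>e \<in> E\<close> C(2) by (simp add: induced_edges_def)
    moreover have "e \<subseteq> F \<inter> C"
      using \<open>e \<subseteq> F\<close> C(2) by simp
    ultimately show False
      unfolding indep_complex_def by blast
  qed
  moreover have "F \<subseteq> V"
    using F Union_components[of V E] by (simp add: join_complex_def)
  ultimately show "F \<in> indep_complex V E"
    by (simp add: indep_complex_def)
qed

theorem corollary1p5:
  assumes "simple_graph V E"
  shows "sortable (indep_complex V E) \<longleftrightarrow>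
         (\<forall>C\<in>components V E. sortable (indep_complex C (induced_edges E C)))"
proof
  assume sortable: "sortable (indep_complex V E)"
  show "\<forall>C\<in>components V E. sortable (indep_complex C (induced_edges E C))"
  proof
    fix C assume "C \<in> components V E"
    show "sortable (indep_complex C (induced_edges E C))"
      unfolding indep_complex_induced_edges[OF component_subset[OF \<open>C \<in> components V E\<close>]]
      by (rule sortable_induced_subcomplex[OF sortable])
  qed
next
  assume sortable: "\<forall>C\<in>components V E. sortable (indep_complex C (induced_edges E C))"
  have "finite V" and edges: "\<forall>e\<in>E. card e = 2"
    using assms by (simp_all add: simple_graph_def)
  have "sortable (join_complex (components V E) (\<lambda>C. C) (\<lambda>C. indep_complex C (induced_edges E C)))"
  proof (rule sortable_join_complex)
    show "finite (components V E)"
      using \<open>finite V\<close> by (simp add: components_eq_image)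
    show "\<forall>C\<in>components V E. finite C"
      using \<open>finite V\<close> component_subset finite_subset by metis
    show "\<forall>C\<in>components V E. \<forall>D\<in>components V E. C \<noteq> D \<longrightarrow> C \<inter> D = {}"
      by (simp add: components_disjoint)
    show "\<forall>C\<in>components V E. \<Union>(indep_complex C (induced_edges E C)) = C"
      using edges by (simp add: Union_indep_complex induced_edges_def)
  qed (rule sortable)
  then show "sortable (indep_complex V E)"
    unfolding indep_complex_eq_join_components[OF assms] .
qed

end
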